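(* Let $X$ be a real normed linear space and let $\Omega_1,\Omega_2\subset X$ be nonempty convex sets such that $\operatorname{int}\Omega_1\neq\emptyset$ and $(\operatorname{int}\Omega_1)\cap\Omega_2=\emptyset$. Then $\Omega_1$ and $\Omega_2$ form an extremal system. Furthermore, $\operatorname{int}(\Omega_1-\Omega_2)\neq\emptyset$.
   Context: Two nonempty sets $\Omega_1,\Omega_2\subset X$ form an extremal system if for every $\varepsilon>0$ there exists $a\in X$ with $\|a\|\le\varepsilon$ and $(\Omega_1+a)\cap\Omega_2=\emptyset$. $\Omega_1-\Omega_2=\{x-y\mid x\in\Omega_1,\ y\in\Omega_2\}$, and $\operatorname{int}$ denotes the topological interior. *)

theory Defs
  imports "HOL-Analysis.Analysis"
begin

definition extremal_system :: "'a::real_normed_vector set \<Rightarrow> 'a set \<Rightarrow> bool" where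
  "extremal_system \<Omega>1 \<Omega>2 \<longleftrightarrow>
     (\<forall>\<epsilon>>0. \<exists>a. norm a \<le> \<epsilon> \<and> ((\<lambda>x. x + a) ` \<Omega>1) \<inter> \<Omega>2 = {})"

definition set_minus :: "'a::real_normed_vector set \<Rightarrow> 'a set \<Rightarrow> 'a set" where
  "set_minus A B = {x - y | x y. x \<in> A \<and> y \<in> B}"

end

theory Submission
  imports Defs
begin

text \<open>Let \<open>c\<close> be an interior point of \<open>\<Omega>1\<close> and \<open>y \<in> \<Omega>2\<close>. Translating \<open>\<Omega>1\<close> by a small positive
  multiple of \<open>c - y\<close> makes it disjoint from \<open>\<Omega>2\<close>: otherwise a convex combination of a
  translated point \<open>x + a\<close> with \<open>y\<close>, which lies in \<open>\<Omega>2\<close>, would equal a point of the open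
  segment from \<open>x\<close> to \<open>c\<close>, which lies in the interior of \<open>\<Omega>1\<close>. The difference set contains
  the translate \<open>\<Omega>1 - y\<close>, hence has interior points.\<close>

text \<open>The library version \<open>mem_interior_convex_shrink\<close> is stated only for Euclidean spaces.\<close>

lemma mem_interior_convex_shrink_normed:
  fixes S :: "'a::real_normed_vector set"
  assumes "convex S" "c \<in> interior S" "x \<in> S" "0 < e" "e \<le> 1"
  shows "x - e *\<^sub>R (x - c) \<in> interior S"
proof -
  obtain r where "r > 0" and ball_c: "ball c r \<subseteq> S"
    using assms(2) mem_interior by blast
  let ?p = "x - e *\<^sub>R (x - c)"
  have "ball ?p (e * r) \<subseteq> S"
  proof
    fix z assume z: "z \<in> ball ?p (e * r)"
    define w where "w = c + (1 / e) *\<^sub>R (z - ?p)"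
    have z_eq: "z = (1 - e) *\<^sub>R x + e *\<^sub>R w"
      using \<open>0 < e\<close> by (simp add: w_def algebra_simps)
    have "dist c w = norm (z - ?p) / e"
      using \<open>0 < e\<close> by (simp add: w_def dist_norm)
    also have "\<dots> < r"
      using z \<open>0 < e\<close> by (simp add: dist_norm norm_minus_commute field_simps mult.commute)
    finally have "w \<in> S"
      using ball_c by auto
    then show "z \<in> S"
      unfolding z_eq using convexD[OF assms(1,3), of w "1 - e" e] assms(4,5) by simp
  qed
  then show ?thesis
    using \<open>r > 0\<close> \<open>0 < e\<close> by (meson centre_in_ball interior_maximal mult_pos_pos open_ball subsetD)
qed

lemma translate_toward_interior_not_mem:
  fixes A B :: "'a::real_normed_vector set"
  assumes "convex A" "convex B" "interior A \<inter> B = {}"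
    and "c \<in> interior A" "y \<in> B" "x \<in> A" "0 < t"
  shows "x + t *\<^sub>R (c - y) \<notin> B"
proof
  assume translate_in: "x + t *\<^sub>R (c - y) \<in> B"
  define l where "l = t / (1 + t)"
  have l: "0 < l" "l \<le> 1"
    using \<open>0 < t\<close> by (auto simp: l_def field_simps)
  have "(1 - l) *\<^sub>R (x + t *\<^sub>R (c - y)) + l *\<^sub>R y \<in> B"
    using convexD[OF assms(2) translate_in \<open>y \<in> B\<close>, of "1 - l" l] l by simp
  moreover have "(1 - l) *\<^sub>R (x + t *\<^sub>R (c - y)) + l *\<^sub>R y = x - l *\<^sub>R (x - c)"
  proof -
    have "(1 - l) * t = l"
      using \<open>0 < t\<close> by (simp add: l_def field_simps)
    then have "(1 - l) *\<^sub>R (t *\<^sub>R (c - y)) = l *\<^sub>R (c - y)"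
      by simp
    then show ?thesis
      by (simp add: scaleR_add_right algebra_simps)
  qed
  moreover have "x - l *\<^sub>R (x - c) \<in> interior A"
    using mem_interior_convex_shrink_normed[OF assms(1,4,6)] l by simp
  ultimately show False
    using assms(3) by auto
qed

lemma extremal_system_if_interior_disjoint:
  fixes A B :: "'a::real_normed_vector set"
  assumes "convex A" "convex B" "interior A \<noteq> {}" "interior A \<inter> B = {}"
  shows "extremal_system A B"
proof (cases "B = {}")
  case True
  then show ?thesis
    by (auto simp: extremal_system_def intro: exI[of _ 0])
next
  case False
  obtain c y where c: "c \<in> interior A" and y: "y \<in> B"
    using assms(3) False by blast
  show ?thesis
    unfolding extremal_system_def
  proof (intro allI impI)
    fix e :: real assume "e > 0"
    define t where "t = e / (norm (c - y) + 1)"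
    have "0 < t"
      using \<open>e > 0\<close> by (simp add: t_def add_nonneg_pos)
    have "norm (t *\<^sub>R (c - y)) = e * (norm (c - y) / (norm (c - y) + 1))"
      using \<open>e > 0\<close> by (simp add: t_def)
    also have "\<dots> \<le> e"
      using \<open>e > 0\<close> by (intro mult_left_le) (auto simp: add_nonneg_pos)
    finally have "norm (t *\<^sub>R (c - y)) \<le> e" .
    moreover have "(\<lambda>x. x + t *\<^sub>R (c - y)) ` A \<inter> B = {}"
      using translate_toward_interior_not_mem[OF assms(1,2,4) c y _ \<open>0 < t\<close>] by blast
    ultimately show "\<exists>a. norm a \<le> e \<and> (\<lambda>x. x + a) ` A \<inter> B = {}"
      by blast
  qed
qed

lemma interior_set_minus_nonempty:
  fixes A B :: "'a::real_normed_vector set"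
  assumes "interior A \<noteq> {}" "B \<noteq> {}"
  shows "interior (set_minus A B) \<noteq> {}"
proof -
  obtain y where "y \<in> B"
    using assms(2) by blast
  then have "(\<lambda>x. x - y) ` A \<subseteq> set_minus A B"
    by (auto simp: set_minus_def)
  then have "(\<lambda>x. x - y) ` interior A \<subseteq> interior (set_minus A B)"
    using interior_mono by (metis interior_translation_subtract)
  then show ?thesis
    using assms(1) by blast
qed

theorem corollary2p3:
  fixes \<Omega>1 \<Omega>2 :: "'a::real_normed_vector set"
  assumes "\<Omega>1 \<noteq> {}" and "\<Omega>2 \<noteq> {}"
    and "convex \<Omega>1" and "convex \<Omega>2"
    and "interior \<Omega>1 \<noteq> {}"
    and "interior \<Omega>1 \<inter> \<Omega>2 = {}"
  shows "extremal_system \<Omega>1 \<Omega>2 \<and> interior (set_minus \<Omega>1 \<Omega>2) \<noteq> {}"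
  using extremal_system_if_interior_disjoint[OF assms(3-6)]
    interior_set_minus_nonempty[OF assms(5,2)]
  by blast

end
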